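(* Let $A>0$, $\phi>0$, $0<\gamma<1$, and $\alpha,\beta>0$ with $\alpha+\beta<1$. Consider the map $F_S:(0,\infty)^2\to(0,\infty)^2$, $$F_S(k,N)=\left(A\left[\left(\frac{\alpha}{1-\alpha}\right)\phi\, k^{2}N^{\gamma}\right]^{\alpha}k^{\beta},\ \left(\frac{1-\alpha}{2\phi k}\right)N^{1-\gamma}\right),$$ which defines the dynamical system $(k_{t+1},N_{t+1})=F_S(k_t,N_t)$. Then $F_S$ has a unique fixed point $(\bar k_S,\bar N_S)$ with $\bar k_S>0$, $\bar N_S>0$, and it is given by $$\bar k_S=\left(A^{1/\alpha}\frac{\alpha}{2}\right)^{\frac{\alpha}{1-\beta-\alpha}},\qquad \bar N_S=A^{\frac{-1}{(1-\beta-\alpha)\gamma}}\left(\frac{1-\alpha}{2\phi}\right)^{\frac{1-\beta-2\alpha}{(1-\beta-\alpha)\gamma}}\left[\left(\frac{\alpha}{1-\alpha}\right)\phi\right]^{\frac{-\alpha}{(1-\beta-\alpha)\gamma}}.$$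
   Context: This is an overlapping-generations model in which $k_t$ is human capital per adult and $N_t$ the adult population at generation $t$, in the case where the father's and mother's childcare times are perfect substitutes. Households' optimal fertility and education spending are $n^*(k,N)=\frac{1-\alpha}{2\phi kN^{\gamma}}$ and $e^*(k,N)=\frac{\alpha}{1-\alpha}\phi k^2N^{\gamma}$, and the dynamics are $k_{t+1}=A\,e^*(k_t,N_t)^{\alpha}k_t^{\beta}$, $N_{t+1}=n^*(k_t,N_t)N_t$, which is the map $F_S$ above. An "economically meaningful" equilibrium is a fixed point with both coordinates strictly positive. *)

theory Defs
  imports Complex_Main
begin

definition F_S :: "real \<Rightarrow> real \<Rightarrow> real \<Rightarrow> real \<Rightarrow> real \<Rightarrow> real \<times> real \<Rightarrow> real \<times> real" where
  "F_S A \<phi> \<gamma> \<alpha> \<beta> = (\<lambda>(k, N).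
     (A * ((\<alpha> / (1 - \<alpha>)) * \<phi> * k^2 * N powr \<gamma>) powr \<alpha> * k powr \<beta>,
      ((1 - \<alpha>) / (2 * \<phi> * k)) * N powr (1 - \<gamma>)))"

end

theory Submission
  imports Defs
begin

text \<open>
  A fixed point with N > 0 keeps the population constant, which forces
  N^\<gamma> = (1 - \<alpha>) / (2 \<phi> k). Substituted into education spending this gives
  e^* = \<alpha> k / 2, so the capital equation decouples into
  k^(1 - \<alpha> - \<beta>) = A (\<alpha>/2)^\<alpha>, which has exactly one positive root
  because 1 - \<alpha> - \<beta> \<noteq> 0; the population equation then determines N.
  The closed forms of the statement are these roots rewritten using
  \<alpha>/2 = (\<alpha> / (1 - \<alpha>)) \<phi> \<cdot> (1 - \<alpha>) / (2 \<phi>).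
\<close>

lemma powr_eq_iff_eq_powr_inverse:
  fixes x c e :: real
  assumes "x > 0" "c > 0" "e \<noteq> 0"
  shows "x powr e = c \<longleftrightarrow> x = c powr (1 / e)"
proof
  assume "x powr e = c"
  then have "c powr (1 / e) = (x powr e) powr (1 / e)" by simp
  also have "\<dots> = x" using assms by (simp add: powr_powr)
  finally show "x = c powr (1 / e)" ..
next
  assume "x = c powr (1 / e)"
  then show "x powr e = c" using assms by (simp add: powr_powr)
qed

lemma F_S_fixed_point_iff:
  fixes A \<phi> \<gamma> \<alpha> \<beta> k N :: real
  assumes "\<phi> > 0" "0 \<le> \<alpha>" "\<alpha> < 1" "k > 0" "N > 0"
  shows "F_S A \<phi> \<gamma> \<alpha> \<beta> (k, N) = (k, N) \<longleftrightarrow>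
    k powr (1 - \<alpha> - \<beta>) = A * (\<alpha> / 2) powr \<alpha> \<and> N powr \<gamma> = (1 - \<alpha>) / (2 * \<phi> * k)"
proof -
  define c where "c = (1 - \<alpha>) / (2 * \<phi> * k)"
  have population: "c * N powr (1 - \<gamma>) = N \<longleftrightarrow> N powr \<gamma> = c"
    using \<open>N > 0\<close> by (auto simp: powr_diff field_simps)
  have capital: "A * ((\<alpha> / (1 - \<alpha>)) * \<phi> * k\<^sup>2 * N powr \<gamma>) powr \<alpha> * k powr \<beta> = k
      \<longleftrightarrow> k powr (1 - \<alpha> - \<beta>) = A * (\<alpha> / 2) powr \<alpha>" if "N powr \<gamma> = c"
  proof -
    have education: "(\<alpha> / (1 - \<alpha>)) * \<phi> * k\<^sup>2 * N powr \<gamma> = (\<alpha> / 2) * k"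
      using assms unfolding that c_def by (simp add: power2_eq_square)
    have expand: "A * ((\<alpha> / (1 - \<alpha>)) * \<phi> * k\<^sup>2 * N powr \<gamma>) powr \<alpha> * k powr \<beta>
        = A * (\<alpha> / 2) powr \<alpha> * k powr (\<alpha> + \<beta>)"
      unfolding education using assms by (simp add: powr_mult powr_add del: times_divide_eq_left)
    have k_factor: "k powr (1 - \<alpha> - \<beta>) * k powr (\<alpha> + \<beta>) = k"
      using \<open>k > 0\<close> by (simp flip: powr_add)
    have "A * ((\<alpha> / (1 - \<alpha>)) * \<phi> * k\<^sup>2 * N powr \<gamma>) powr \<alpha> * k powr \<beta> = k \<longleftrightarrow>
        A * (\<alpha> / 2) powr \<alpha> * k powr (\<alpha> + \<beta>) = k powr (1 - \<alpha> - \<beta>) * k powr (\<alpha> + \<beta>)"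
      by (simp only: expand k_factor)
    also have "\<dots> \<longleftrightarrow> k powr (1 - \<alpha> - \<beta>) = A * (\<alpha> / 2) powr \<alpha>"
      using \<open>k > 0\<close> by auto
    finally show ?thesis .
  qed
  have F: "F_S A \<phi> \<gamma> \<alpha> \<beta> (k, N) =
      (A * ((\<alpha> / (1 - \<alpha>)) * \<phi> * k\<^sup>2 * N powr \<gamma>) powr \<alpha> * k powr \<beta>, c * N powr (1 - \<gamma>))"
    unfolding F_S_def c_def by simp
  show ?thesis
    unfolding F prod.inject c_def[symmetric] using population capital by blast
qed

definition steady_capital :: "real \<Rightarrow> real \<Rightarrow> real \<Rightarrow> real" where
  "steady_capital A \<alpha> \<beta> = (A * (\<alpha> / 2) powr \<alpha>) powr (1 / (1 - \<alpha> - \<beta>))"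

definition steady_population :: "real \<Rightarrow> real \<Rightarrow> real \<Rightarrow> real \<Rightarrow> real \<Rightarrow> real" where
  "steady_population A \<phi> \<gamma> \<alpha> \<beta> =
     ((1 - \<alpha>) / (2 * \<phi> * steady_capital A \<alpha> \<beta>)) powr (1 / \<gamma>)"

lemma steady_capital_pos: "A > 0 \<Longrightarrow> \<alpha> > 0 \<Longrightarrow> steady_capital A \<alpha> \<beta> > 0"
  by (simp add: steady_capital_def)

lemma steady_population_pos:
  "A > 0 \<Longrightarrow> \<phi> > 0 \<Longrightarrow> 0 < \<alpha> \<Longrightarrow> \<alpha> < 1 \<Longrightarrow> steady_population A \<phi> \<gamma> \<alpha> \<beta> > 0"
  using steady_capital_pos[of A \<alpha> \<beta>] by (simp add: steady_population_def)

lemma F_S_fixed_point_iff_steady_state: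
  fixes A \<phi> \<gamma> \<alpha> \<beta> k N :: real
  assumes "A > 0" "\<phi> > 0" "\<gamma> \<noteq> 0" "0 < \<alpha>" "\<alpha> < 1" "\<alpha> + \<beta> \<noteq> 1" "k > 0" "N > 0"
  shows "F_S A \<phi> \<gamma> \<alpha> \<beta> (k, N) = (k, N) \<longleftrightarrow>
    k = steady_capital A \<alpha> \<beta> \<and> N = steady_population A \<phi> \<gamma> \<alpha> \<beta>"
proof -
  have "1 - \<alpha> - \<beta> \<noteq> 0" "(1 - \<alpha>) / (2 * \<phi> * k) > 0" "A * (\<alpha> / 2) powr \<alpha> > 0"
    using assms by auto
  then show ?thesis
    using assms
    by (simp add: F_S_fixed_point_iff powr_eq_iff_eq_powr_inverse steady_capital_def
        steady_population_def conj_commute cong: conj_cong)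
qed

lemma steady_capital_eq:
  fixes A \<alpha> \<beta> :: real
  assumes "A > 0" "\<alpha> > 0"
  shows "steady_capital A \<alpha> \<beta> = (A powr (1 / \<alpha>) * (\<alpha> / 2)) powr (\<alpha> / (1 - \<beta> - \<alpha>))"
proof -
  have "\<alpha> / (1 - \<beta> - \<alpha>) = \<alpha> * (1 / (1 - \<alpha> - \<beta>))"
    by (simp add: algebra_simps)
  then have "(A powr (1 / \<alpha>) * (\<alpha> / 2)) powr (\<alpha> / (1 - \<beta> - \<alpha>))
      = ((A powr (1 / \<alpha>) * (\<alpha> / 2)) powr \<alpha>) powr (1 / (1 - \<alpha> - \<beta>))"
    by (simp only: powr_powr)
  also have "(A powr (1 / \<alpha>) * (\<alpha> / 2)) powr \<alpha> = (A powr (1 / \<alpha>)) powr \<alpha> * (\<alpha> / 2) powr \<alpha>"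
    using assms by (intro powr_mult)
  also have "\<dots> = A * (\<alpha> / 2) powr \<alpha>"
    using assms by (simp add: powr_powr)
  finally show ?thesis
    unfolding steady_capital_def ..
qed

lemma steady_population_eq:
  fixes A \<phi> \<gamma> \<alpha> \<beta> :: real
  assumes "A > 0" "\<phi> > 0" "0 < \<alpha>" "\<alpha> < 1" "\<alpha> + \<beta> \<noteq> 1" "\<gamma> \<noteq> 0"
  shows "steady_population A \<phi> \<gamma> \<alpha> \<beta> =
    A powr (-1 / ((1 - \<beta> - \<alpha>) * \<gamma>))
      * ((1 - \<alpha>) / (2 * \<phi>)) powr ((1 - \<beta> - 2 * \<alpha>) / ((1 - \<beta> - \<alpha>) * \<gamma>))
      * ((\<alpha> / (1 - \<alpha>)) * \<phi>) powr (- \<alpha> / ((1 - \<beta> - \<alpha>) * \<gamma>))"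
    (is "_ = ?N")
proof -
  define c where "c = (1 - \<alpha>) / (2 * \<phi>)"
  define q where "q = (\<alpha> / (1 - \<alpha>)) * \<phi>"
  define D where "D = 1 - \<beta> - \<alpha>"
  define K where "K = steady_capital A \<alpha> \<beta>"
  have pos: "c > 0" "q > 0" "K > 0"
    using assms steady_capital_pos[of A \<alpha> \<beta>] by (simp_all add: c_def q_def K_def)
  have "D \<noteq> 0"
    using assms by (simp add: D_def)
  have "\<alpha> / 2 = q * c"
    using assms by (simp add: c_def q_def)
  then have ln_half_alpha: "ln (\<alpha> / 2) = ln q + ln c"
    using pos by (simp add: ln_mult)
  have ln_K: "ln K = (ln A + \<alpha> * (ln q + ln c)) / D"
    using assms
    by (simp add: K_def steady_capital_def D_def ln_powr ln_mult ln_half_alpha diff_diff_eq add.commute)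
  have "steady_population A \<phi> \<gamma> \<alpha> \<beta> = (c / K) powr (1 / \<gamma>)"
    unfolding steady_population_def c_def K_def by simp
  then have ln_population: "ln (steady_population A \<phi> \<gamma> \<alpha> \<beta>) = (ln c - ln K) / \<gamma>"
    using pos by (simp add: ln_powr ln_div)
  have N_eq: "?N = A powr (-1 / (D * \<gamma>)) * c powr ((D - \<alpha>) / (D * \<gamma>)) * q powr (- \<alpha> / (D * \<gamma>))"
    unfolding c_def q_def D_def by (simp add: algebra_simps)
  have ln_N: "ln ?N = (- ln A + (D - \<alpha>) * ln c - \<alpha> * ln q) / (D * \<gamma>)"
    unfolding N_eq using pos assms \<open>D \<noteq> 0\<close> by (simp add: ln_mult ln_powr field_simps)
  have "ln (steady_population A \<phi> \<gamma> \<alpha> \<beta>) = ln ?N"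
    unfolding ln_population ln_N ln_K using \<open>D \<noteq> 0\<close> \<open>\<gamma> \<noteq> 0\<close>
    by (simp add: field_simps)
  then show ?thesis
    using assms pos by (simp add: steady_population_pos)
qed

theorem proposition1:
  fixes A \<phi> \<gamma> \<alpha> \<beta> :: real
  assumes "A > 0" "\<phi> > 0" "0 < \<gamma>" "\<gamma> < 1" "\<alpha> > 0" "\<beta> > 0" "\<alpha> + \<beta> < 1"
  shows "{p :: real \<times> real. fst p > 0 \<and> snd p > 0 \<and> F_S A \<phi> \<gamma> \<alpha> \<beta> p = p} =
         {((A powr (1 / \<alpha>) * (\<alpha> / 2)) powr (\<alpha> / (1 - \<beta> - \<alpha>)),
           A powr (-1 / ((1 - \<beta> - \<alpha>) * \<gamma>))
             * ((1 - \<alpha>) / (2 * \<phi>)) powr ((1 - \<beta> - 2 * \<alpha>) / ((1 - \<beta> - \<alpha>) * \<gamma>))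
             * ((\<alpha> / (1 - \<alpha>)) * \<phi>) powr (- \<alpha> / ((1 - \<beta> - \<alpha>) * \<gamma>)))}"
proof -
  have parameters: "A > 0" "\<phi> > 0" "\<gamma> \<noteq> 0" "0 < \<alpha>" "\<alpha> < 1" "\<alpha> + \<beta> \<noteq> 1"
    using assms by auto
  have "fst p > 0 \<and> snd p > 0 \<and> F_S A \<phi> \<gamma> \<alpha> \<beta> p = p \<longleftrightarrow>
      p = (steady_capital A \<alpha> \<beta>, steady_population A \<phi> \<gamma> \<alpha> \<beta>)" for p
    using F_S_fixed_point_iff_steady_state[OF parameters]
      steady_capital_pos[of A \<alpha> \<beta>] steady_population_pos[of A \<phi> \<alpha> \<gamma> \<beta>] parameters
    by (cases p) auto
  then show ?thesis
    using steady_capital_eq[of A \<alpha> \<beta>] steady_population_eq[OF parameters(1,2,4-6,3)] parameters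
    by auto
qed

end
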